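(* In the setting described in the context, for every $\varepsilon>0$ and every $\delta\in(0,\eta]$, $$\|\nabla\varphi_j\|_{L^2(D_\delta)}^2\le\lambda_j(\varepsilon,\delta)\,\varepsilon\qquad\text{for all } j\ge1,$$ where $(\lambda_j,\varphi_j)$ are the eigenpairs defined in the context (for the given $\varepsilon,\delta$).
   Context: Let $\Omega\subset\mathbb{R}^d$ be a bounded connected Lipschitz domain; $\langle\cdot,\cdot\rangle$ and $\|\cdot\|$ denote the $L^2(\Omega)$ inner product and norm, $|\cdot|$ the Euclidean norm, $\mathcal{H}^{d-1}$ the $(d-1)$-dimensional Hausdorff measure. Weight: for each $\varepsilon>0$, $\hat\mu_\varepsilon:[0,\infty)\to\mathbb{R}$ is non-increasing with $\hat\mu_\varepsilon(0)=\varepsilon^{-1}$, $\hat\mu_\varepsilon(t)>0$ and $t\hat\mu_\varepsilon(t)\le1$ for all $t\ge0$; for $w$ with $\nabla w\in L^\infty(\Omega)$ put $\mu_\varepsilon[w](x)=\hat\mu_\varepsilon(|\nabla w(x)|)$. Medium: $u=u^0+\widetilde u$ with $u^0=\sum_{m=1}^M\hat u^{0,m}\chi^{0,m}$, where $\hat u^{0,m}\in\mathbb{R}$ and $\chi^{0,m}$ is the characteristic function of $A^{0,m}$, the $A^{0,m}$ being mutually disjoint connected open sets with $\overline\Omega\subset\overline{\bigcup_m A^{0,m}}$ and $\mathcal{H}^{d-1}(\partial A^{0,m}\cap\partial\Omega)>0$; and $\widetilde u=\sum_{k=1}^K\hat u^k\chi^k$ with $\hat u^k\neq0$, $\chi^k$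 the characteristic function of a connected open set $A^k$ compactly contained in $\Omega\setminus S$, where $S=(\bigcup_m\partial A^{0,m})\setminus\partial\Omega$; the boundaries $\partial A^1,\dots,\partial A^K$ are mutually disjoint. For $\delta>0$: $S_\delta=\{x\in\Omega:\operatorname{dist}(x,S)<\delta\}$, $U^k_\delta=\{x\in\Omega:\operatorname{dist}(x,\partial A^k)<\delta\}$, $U_\delta=\bigcup_{k=1}^K U^k_\delta$, $D_\delta=\Omega\setminus\overline{U_\delta\cup S_\delta}$, $A^k_\delta=(\Omega\setminus\overline{U^k_\delta})\cap A^k$, $A_\delta=\bigcup_k A^k_\delta$. Approximation: $\mathcal{V}^\delta\subset H^1(\Omega)$ is a closed subspace, $\mathcal{V}^\delta_0=\mathcal{V}^\delta\cap H^1_0(\Omega)$; $\chi^{0,m}_\delta\in\mathcal{V}^\delta$ and $\chi^k_\delta\in\mathcal{V}^\delta_0$ converge in $L^2(\Omega)$ to $\chi^{0,m}$, $\chi^k$ as $\delta\to0$; $u^0_\delta=\sum_m\hat u^{0,m}\chi^{0,m}_\delta$, $\widetilde u_\delta=\sum_k\hat u^k\chi^k_\delta$, $u_\delta=u^0_\delta+\widetilde u_\delta$. Standing assumptions: $\eta>0$ is such that $A^k_\eta\neq\emptyset$ for all $k$, $\overline{S_\eta}\cap\overline{U_\eta}=\emptyset$, $\overline{U^k_\eta}\cap\overline{U^j_\eta}=\emptyset$ for $k\ne j$, and every connected component $E$ of $D_\eta\setminus A_\eta$ satisfies $\mathcal{H}^{d-1}(\partial E\cap\partial\Omega)>0$.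 For all $\delta\in(0,\eta]$: $\nabla\chi^{0,m}_\delta\in L^\infty(\Omega)$ with $\operatorname{supp}\nabla\chi^{0,m}_\delta\subset\overline{S_\delta}$, and $\nabla\chi^k_\delta\in L^\infty(\Omega)$ with $\operatorname{supp}\nabla\chi^k_\delta\subset\overline{U^k_\delta}$. Eigenproblem: $B[v,w]=\langle\mu_\varepsilon[u_\delta]\nabla v,\nabla w\rangle$. A real $\lambda$ is an eigenvalue if there is $0\ne\varphi\in\mathcal{V}^\delta_0$ with $B[\varphi,v]=\lambda\langle\varphi,v\rangle$ for all $v\in\mathcal{V}^\delta_0$. $(\lambda_j)_{j\ge1}=(\lambda_j(\varepsilon,\delta))$ is the nondecreasing sequence of eigenvalues repeated according to multiplicity, and $(\varphi_j)_{j\ge1}$ is a corresponding basis of eigenfunctions of $\mathcal{V}^\delta_0$, orthonormal in $L^2(\Omega)$. *)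

theory Defs
  imports "HOL-Analysis.Analysis"
begin

definition L2 :: "'a::euclidean_space set \<Rightarrow> ('a \<Rightarrow> real) \<Rightarrow> bool" where
  "L2 \<Omega> f \<longleftrightarrow> set_borel_measurable lebesgue \<Omega> f \<and> set_integrable lebesgue \<Omega> (\<lambda>x. (f x)^2)"

definition L2v :: "'a::euclidean_space set \<Rightarrow> ('a \<Rightarrow> 'a) \<Rightarrow> bool" where
  "L2v \<Omega> G \<longleftrightarrow> set_borel_measurable lebesgue \<Omega> G \<and> set_integrable lebesgue \<Omega> (\<lambda>x. (norm (G x))^2)"

definition l2inner :: "'a::euclidean_space set \<Rightarrow> ('a \<Rightarrow> real) \<Rightarrow> ('a \<Rightarrow> real) \<Rightarrow> real" where
  "l2inner \<Omega> f g = (LINT x:\<Omega>|lebesgue. f x * g x)"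

definition test_fn :: "'a::euclidean_space set \<Rightarrow> ('a \<Rightarrow> real) \<Rightarrow> ('a \<Rightarrow> 'a) \<Rightarrow> bool" where
  "test_fn \<Omega> \<psi> g \<longleftrightarrow> (\<forall>x. GDERIV \<psi> x :> g x) \<and> continuous_on UNIV g \<and>
     compact (closure {x. \<psi> x \<noteq> 0}) \<and> closure {x. \<psi> x \<noteq> 0} \<subseteq> \<Omega>"

definition is_weak_grad :: "'a::euclidean_space set \<Rightarrow> ('a \<Rightarrow> real) \<Rightarrow> ('a \<Rightarrow> 'a) \<Rightarrow> bool" where
  "is_weak_grad \<Omega> f G \<longleftrightarrow> (\<forall>\<psi> g. test_fn \<Omega> \<psi> g \<longrightarrow>
     (LINT x:\<Omega>|lebesgue. f x *\<^sub>R g x) = - (LINT x:\<Omega>|lebesgue. \<psi> x *\<^sub>R G x))"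

definition H1 :: "'a::euclidean_space set \<Rightarrow> ('a \<Rightarrow> real) \<Rightarrow> bool" where
  "H1 \<Omega> f \<longleftrightarrow> L2 \<Omega> f \<and> (\<exists>G. L2v \<Omega> G \<and> is_weak_grad \<Omega> f G)"

text \<open>The weak gradient (a chosen representative; unique a.e.).\<close>
definition wgrad :: "'a::euclidean_space set \<Rightarrow> ('a \<Rightarrow> real) \<Rightarrow> 'a \<Rightarrow> 'a" where
  "wgrad \<Omega> f = (SOME G. L2v \<Omega> G \<and> is_weak_grad \<Omega> f G)"

definition h1dist :: "'a::euclidean_space set \<Rightarrow> ('a \<Rightarrow> real) \<Rightarrow> ('a \<Rightarrow> real) \<Rightarrow> real" where
  "h1dist \<Omega> f g = (LINT x:\<Omega>|lebesgue. (f x - g x)^2)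
     + (LINT x:\<Omega>|lebesgue. (norm (wgrad \<Omega> f x - wgrad \<Omega> g x))^2)"

definition H10 :: "'a::euclidean_space set \<Rightarrow> ('a \<Rightarrow> real) \<Rightarrow> bool" where
  "H10 \<Omega> f \<longleftrightarrow> H1 \<Omega> f \<and> (\<exists>\<psi> g. (\<forall>k. test_fn \<Omega> (\<psi> k) (g k)) \<and>
     (\<lambda>k. (LINT x:\<Omega>|lebesgue. (\<psi> k x - f x)^2)
        + (LINT x:\<Omega>|lebesgue. (norm (g k x - wgrad \<Omega> f x))^2)) \<longlonglongrightarrow> 0)"

definition closed_subspace_H1 :: "'a::euclidean_space set \<Rightarrow> ('a \<Rightarrow> real) set \<Rightarrow> bool" where
  "closed_subspace_H1 \<Omega> V \<longleftrightarrow> V \<subseteq> {f. H1 \<Omega> f} \<and> (\<lambda>x. 0) \<in> V \<and>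
     (\<forall>f\<in>V. \<forall>g\<in>V. (\<lambda>x. f x + g x) \<in> V) \<and> (\<forall>c. \<forall>f\<in>V. (\<lambda>x. c * f x) \<in> V) \<and>
     (\<forall>fs f. (\<forall>k. fs k \<in> V) \<and> H1 \<Omega> f \<and> (\<lambda>k. h1dist \<Omega> (fs k) f) \<longlonglongrightarrow> 0 \<longrightarrow> f \<in> V)"

definition grad_Linf :: "'a::euclidean_space set \<Rightarrow> ('a \<Rightarrow> real) \<Rightarrow> bool" where
  "grad_Linf \<Omega> f \<longleftrightarrow> (\<exists>C. AE x in lebesgue. x \<in> \<Omega> \<longrightarrow> norm (wgrad \<Omega> f x) \<le> C)"

definition grad_supp_in :: "'a::euclidean_space set \<Rightarrow> ('a \<Rightarrow> real) \<Rightarrow> 'a set \<Rightarrow> bool" where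
  "grad_supp_in \<Omega> f T \<longleftrightarrow> (AE x in lebesgue. x \<in> \<Omega> - T \<longrightarrow> wgrad \<Omega> f x = 0)"

definition nbhd :: "'a::euclidean_space set \<Rightarrow> 'a set \<Rightarrow> real \<Rightarrow> 'a set" where
  "nbhd \<Omega> T d = {x\<in>\<Omega>. \<exists>y\<in>T. dist x y < d}"

definition unit_ball_vol :: "nat \<Rightarrow> real" where
  "unit_ball_vol s = pi powr (real s / 2) / Gamma (real s / 2 + 1)"

definition hausdorff_pre :: "nat \<Rightarrow> real \<Rightarrow> 'a::euclidean_space set \<Rightarrow> ennreal" where
  "hausdorff_pre s d A = (INF C \<in> {C :: nat \<Rightarrow> 'a set. A \<subseteq> (\<Union>i. C i) \<and> (\<forall>i. bounded (C i) \<and> diameter (C i) \<le> d)}.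
      (\<Sum>i. ennreal (if C i = {} then 0 else unit_ball_vol s * (diameter (C i) / 2) ^ s)))"

definition hausdorff :: "nat \<Rightarrow> 'a::euclidean_space set \<Rightarrow> ennreal" where
  "hausdorff s A = (SUP d \<in> {0<..}. hausdorff_pre s d A)"

text \<open>Lipschitz domain: open, boundary locally the graph of a Lipschitz function.\<close>
definition lipschitz_domain :: "'a::euclidean_space set \<Rightarrow> bool" where
  "lipschitz_domain \<Omega> \<longleftrightarrow> open \<Omega> \<and> (\<forall>p\<in>frontier \<Omega>. \<exists>r>0. \<exists>e L h. norm e = 1 \<and>
     L-lipschitz_on UNIV (h :: 'a \<Rightarrow> real) \<and> (\<forall>x. h x = h (x - (x \<bullet> e) *\<^sub>R e)) \<and>
     \<Omega> \<inter> ball p r = {x \<in> ball p r. x \<bullet> e < h x})"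

definition bilin :: "'a::euclidean_space set \<Rightarrow> (real \<Rightarrow> real) \<Rightarrow> ('a \<Rightarrow> real) \<Rightarrow> ('a \<Rightarrow> real) \<Rightarrow> ('a \<Rightarrow> real) \<Rightarrow> real" where
  "bilin \<Omega> \<mu> w v z = (LINT x:\<Omega>|lebesgue. \<mu> (norm (wgrad \<Omega> w x)) * (wgrad \<Omega> v x \<bullet> wgrad \<Omega> z x))"

text \<open>(lam j, phi j), j in J = {1..} (or {1..N} if V0 is finite dimensional): nondecreasing
  eigenvalues with an L2-orthonormal basis of eigenfunctions of V0.\<close>
definition eigen_seq :: "'a::euclidean_space set \<Rightarrow> ('a \<Rightarrow> real) set \<Rightarrow> (('a \<Rightarrow> real) \<Rightarrow> ('a \<Rightarrow> real) \<Rightarrow> real)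
    \<Rightarrow> nat set \<Rightarrow> (nat \<Rightarrow> real) \<Rightarrow> (nat \<Rightarrow> 'a \<Rightarrow> real) \<Rightarrow> bool" where
  "eigen_seq \<Omega> V0 B J lam phi \<longleftrightarrow>
     (J = {1..} \<or> (\<exists>N. J = {1..N})) \<and>
     (\<forall>j\<in>J. phi j \<in> V0 \<and> (\<forall>v\<in>V0. B (phi j) v = lam j * l2inner \<Omega> (phi j) v)) \<and>
     (\<forall>i\<in>J. \<forall>j\<in>J. l2inner \<Omega> (phi i) (phi j) = (if i = j then 1 else 0)) \<and>
     (\<forall>i\<in>J. \<forall>j\<in>J. i \<le> j \<longrightarrow> lam i \<le> lam j) \<and>
     (\<forall>v\<in>V0. \<forall>e>0. \<exists>F c. finite F \<and> F \<subseteq> J \<and>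
        (LINT x:\<Omega>|lebesgue. (v x - (\<Sum>j\<in>F. c j * phi j x))^2) < e)"


definition Sset :: "'a::euclidean_space set \<Rightarrow> nat \<Rightarrow> (nat \<Rightarrow> 'a set) \<Rightarrow> 'a set" where
  "Sset \<Omega> M A0 = (\<Union>m\<in>{1..M}. frontier (A0 m)) - frontier \<Omega>"
definition Sdel :: "'a::euclidean_space set \<Rightarrow> nat \<Rightarrow> (nat \<Rightarrow> 'a set) \<Rightarrow> real \<Rightarrow> 'a set" where
  "Sdel \<Omega> M A0 t = nbhd \<Omega> (Sset \<Omega> M A0) t"
definition Udel :: "'a::euclidean_space set \<Rightarrow> (nat \<Rightarrow> 'a set) \<Rightarrow> nat \<Rightarrow> real \<Rightarrow> 'a set" where
  "Udel \<Omega> A k t = nbhd \<Omega> (frontier (A k)) t"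
definition Uall :: "'a::euclidean_space set \<Rightarrow> nat \<Rightarrow> (nat \<Rightarrow> 'a set) \<Rightarrow> real \<Rightarrow> 'a set" where
  "Uall \<Omega> K A t = (\<Union>k\<in>{1..K}. Udel \<Omega> A k t)"
definition Ddel :: "'a::euclidean_space set \<Rightarrow> nat \<Rightarrow> (nat \<Rightarrow> 'a set) \<Rightarrow> nat \<Rightarrow> (nat \<Rightarrow> 'a set) \<Rightarrow> real \<Rightarrow> 'a set" where
  "Ddel \<Omega> M A0 K A t = \<Omega> - closure (Uall \<Omega> K A t \<union> Sdel \<Omega> M A0 t)"
definition Adel :: "'a::euclidean_space set \<Rightarrow> (nat \<Rightarrow> 'a set) \<Rightarrow> nat \<Rightarrow> real \<Rightarrow> 'a set" where
  "Adel \<Omega> A k t = (\<Omega> - closure (Udel \<Omega> A k t)) \<inter> A k"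
definition Aall :: "'a::euclidean_space set \<Rightarrow> nat \<Rightarrow> (nat \<Rightarrow> 'a set) \<Rightarrow> real \<Rightarrow> 'a set" where
  "Aall \<Omega> K A t = (\<Union>k\<in>{1..K}. Adel \<Omega> A k t)"

end

theory Submission
  imports Defs
begin

text \<open>
  On \<open>D\<^sub>\<delta>\<close> every \<open>\<chi>\<^sup>0\<^sup>,\<^sup>m\<^sub>\<delta>\<close> and \<open>\<chi>\<^sup>k\<^sub>\<delta>\<close> has vanishing weak gradient, so
  \<open>\<integral> u\<^sub>\<delta> \<nabla>\<psi> = 0\<close> for every test function \<open>\<psi>\<close> supported in \<open>D\<^sub>\<delta>\<close>. By the fundamental lemma of the
  calculus of variations (proved with products of \<open>C\<^sup>1\<close> spline bumps approximating indicators of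
  boxes) the weak gradient of \<open>u\<^sub>\<delta>\<close> vanishes a.e. on \<open>D\<^sub>\<delta>\<close>, where the weight therefore equals
  \<open>\<mu>\<^sub>\<epsilon>(0) = 1/\<epsilon>\<close>. Testing the eigenvalue equation with \<open>\<phi>\<^sub>j\<close> itself gives
  \<open>\<lambda>\<^sub>j = B[\<phi>\<^sub>j, \<phi>\<^sub>j] \<ge> \<epsilon>\<^sup>-\<^sup>1 \<integral>\<^bsub>D\<^sub>\<delta>\<^esub> |\<nabla>\<phi>\<^sub>j|\<^sup>2\<close>, since the weight is nonnegative.
\<close>

section \<open>\<open>C\<^sup>1\<close> bump functions\<close>

definition sq_ramp :: "real \<Rightarrow> real" where
  "sq_ramp t = (max 0 t)\<^sup>2"

lemma sq_ramp_has_real_derivative: "(sq_ramp has_real_derivative 2 * max 0 x) (at x)"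
proof -
  consider "x < 0" | "x = 0" | "x > 0" by linarith
  then show ?thesis
  proof cases
    case 1
    have "((\<lambda>_. 0) has_real_derivative 2 * max 0 x) (at x)" using 1 by simp
    then show ?thesis
      by (rule has_field_derivative_transform_within_open[where S="{..<0}"]) (use 1 in \<open>auto simp: sq_ramp_def\<close>)
  next
    case 2
    have "((\<lambda>y::real. max 0 y) \<longlongrightarrow> 2 * max 0 0) (at 0)"
      using tendsto_max[OF tendsto_const tendsto_ident_at, of 0 0 UNIV] by simp
    moreover have "\<forall>\<^sub>F y in at 0. max 0 y = (sq_ramp y - sq_ramp 0) / (y - 0)"
      unfolding eventually_at_filter by (auto simp: sq_ramp_def power2_eq_square max_def)
    ultimately show ?thesis
      unfolding 2 has_field_derivative_iff by (rule Lim_transform_eventually)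
  next
    case 3
    have "((\<lambda>t. t\<^sup>2) has_real_derivative 2 * max 0 x) (at x)"
      using 3 by (auto intro!: derivative_eq_intros)
    then show ?thesis
      by (rule has_field_derivative_transform_within_open[where S="{0<..}"]) (use 3 in \<open>auto simp: sq_ramp_def\<close>)
  qed
qed

text \<open>A \<open>C\<^sup>1\<close> quadratic spline rising from \<open>0\<close> on \<open>]-\<infinity>,0]\<close> to \<open>1\<close> on \<open>[1,\<infinity>[\<close>.\<close>

definition smooth_step :: "real \<Rightarrow> real" where
  "smooth_step t = 2 * sq_ramp t - 4 * sq_ramp (t - 1/2) + 2 * sq_ramp (t - 1)"

definition smooth_step' :: "real \<Rightarrow> real" where
  "smooth_step' t = 4 * max 0 t - 8 * max 0 (t - 1/2) + 4 * max 0 (t - 1)"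

lemma smooth_step_has_real_derivative: "(smooth_step has_real_derivative smooth_step' x) (at x)"
proof -
  have shifted: "((\<lambda>t. sq_ramp (t - c)) has_real_derivative 2 * max 0 (x - c)) (at x)" for c
  proof -
    have "((\<lambda>t. t - c) has_real_derivative 1) (at x)"
      by (auto intro!: derivative_eq_intros)
    from DERIV_chain2[OF sq_ramp_has_real_derivative this] show ?thesis by simp
  qed
  have "((\<lambda>t. 2 * sq_ramp (t - 0) - 4 * sq_ramp (t - 1/2) + 2 * sq_ramp (t - 1)) has_real_derivative
      2 * (2 * max 0 (x - 0)) - 4 * (2 * max 0 (x - 1/2)) + 2 * (2 * max 0 (x - 1))) (at x)"
    by (intro DERIV_add DERIV_diff DERIV_cmult shifted)
  then show ?thesis
    unfolding smooth_step_def[abs_def] smooth_step'_def by (simp add: algebra_simps)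
qed

lemma continuous_on_smooth_step: "continuous_on UNIV smooth_step"
  unfolding smooth_step_def sq_ramp_def by (intro continuous_intros)

lemma continuous_on_smooth_step': "continuous_on UNIV smooth_step'"
  unfolding smooth_step'_def by (intro continuous_intros)

lemma smooth_step_eq_0: "t \<le> 0 \<Longrightarrow> smooth_step t = 0"
  by (simp add: smooth_step_def sq_ramp_def)

lemma smooth_step_eq_1: "1 \<le> t \<Longrightarrow> smooth_step t = 1"
  by (simp add: smooth_step_def sq_ramp_def power2_eq_square algebra_simps)

lemma smooth_step_bounds: "0 \<le> smooth_step t \<and> smooth_step t \<le> 1"
proof -
  consider "t \<le> 0" | "0 < t" "t \<le> 1/2" | "1/2 < t" "t < 1" | "1 \<le> t" by linarith
  then show ?thesis
  proof cases
    case 2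
    then have "t * t \<le> (1/2) * (1/2)" by (intro mult_mono) auto
    then show ?thesis using 2 by (simp add: smooth_step_def sq_ramp_def power2_eq_square)
  next
    case 3
    then have "(1 - t) * (1 - t) \<le> (1/2) * (1/2)" by (intro mult_mono) auto
    moreover have "0 \<le> (1 - t) * (1 - t)" by simp
    ultimately show ?thesis using 3 by (simp add: smooth_step_def sq_ramp_def power2_eq_square algebra_simps)
  qed (simp_all add: smooth_step_eq_0 smooth_step_eq_1)
qed

definition interval_bump :: "real \<Rightarrow> real \<Rightarrow> real \<Rightarrow> real \<Rightarrow> real" where
  "interval_bump n a b t = smooth_step (n * (t - a) - 1) * smooth_step (n * (b - t) - 1)"

definition interval_bump' :: "real \<Rightarrow> real \<Rightarrow> real \<Rightarrow> real \<Rightarrow> real" where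
  "interval_bump' n a b t = n * smooth_step' (n * (t - a) - 1) * smooth_step (n * (b - t) - 1)
     - n * smooth_step (n * (t - a) - 1) * smooth_step' (n * (b - t) - 1)"

lemma interval_bump_has_real_derivative:
  "(interval_bump n a b has_real_derivative interval_bump' n a b t) (at t)"
proof -
  have "((\<lambda>t. n * (t - a) - 1) has_real_derivative n) (at t)"
    and "((\<lambda>t. n * (b - t) - 1) has_real_derivative - n) (at t)"
    by (auto intro!: derivative_eq_intros)
  from DERIV_mult'[OF DERIV_chain2[OF smooth_step_has_real_derivative this(1)]
      DERIV_chain2[OF smooth_step_has_real_derivative this(2)]]
  show ?thesis
    unfolding interval_bump_def[abs_def] interval_bump'_def by (simp add: algebra_simps)
qed

lemma continuous_on_interval_bump: "continuous_on UNIV (interval_bump n a b)"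
  unfolding interval_bump_def[abs_def]
  by (intro continuous_intros continuous_on_compose2[OF continuous_on_smooth_step]) auto

lemma continuous_on_interval_bump': "continuous_on UNIV (interval_bump' n a b)"
  unfolding interval_bump'_def[abs_def]
  by (intro continuous_intros continuous_on_compose2[OF continuous_on_smooth_step]
      continuous_on_compose2[OF continuous_on_smooth_step']) auto

lemma interval_bump_bounds: "0 \<le> interval_bump n a b t \<and> interval_bump n a b t \<le> 1"
  unfolding interval_bump_def
  using smooth_step_bounds[of "n * (t - a) - 1"] smooth_step_bounds[of "n * (b - t) - 1"]
  by (auto intro: mult_le_one)

lemma interval_bump_nonzero_imp:
  assumes "0 < n" "interval_bump n a b t \<noteq> 0"
  shows "a + 1/n < t \<and> t < b - 1/n"
proof -
  have "smooth_step (n * (t - a) - 1) \<noteq> 0" "smooth_step (n * (b - t) - 1) \<noteq> 0"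
    using assms(2) by (auto simp: interval_bump_def)
  then have "1 < n * (t - a)" "1 < n * (b - t)"
    by (smt (verit) smooth_step_eq_0)+
  then show ?thesis
    using assms(1) by (auto simp: field_simps)
qed

lemma eventually_interval_bump_eq_1:
  assumes "a < t" "t < b"
  shows "\<forall>\<^sub>F k in sequentially. interval_bump (real (Suc k)) a b t = 1"
proof -
  obtain N :: nat where N: "max (2 / (t - a)) (2 / (b - t)) \<le> real N"
    using real_arch_simple by blast
  have "interval_bump (real (Suc k)) a b t = 1" if "N \<le> k" for k
  proof -
    have "2 / (t - a) \<le> real (Suc k)" "2 / (b - t) \<le> real (Suc k)"
      using N that by auto
    then have "2 \<le> real (Suc k) * (t - a)" "2 \<le> real (Suc k) * (b - t)"
      using assms by (simp_all add: field_simps)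
    then show ?thesis
      unfolding interval_bump_def by (simp add: smooth_step_eq_1)
  qed
  then show ?thesis
    unfolding eventually_sequentially by blast
qed

lemma GDERIV_prod:
  assumes "finite I" "\<And>i. i \<in> I \<Longrightarrow> GDERIV (f i) x :> df i"
  shows "GDERIV (\<lambda>x. \<Prod>i\<in>I. f i x) x :> (\<Sum>i\<in>I. (\<Prod>j\<in>I-{i}. f j x) *\<^sub>R df i)"
proof -
  have "((\<lambda>x. \<Prod>i\<in>I. f i x) has_derivative (\<lambda>y. \<Sum>i\<in>I. (y \<bullet> df i) * (\<Prod>j\<in>I - {i}. f j x))) (at x)"
    by (rule has_derivative_prod) (use assms(2) in \<open>auto simp: gderiv_def\<close>)
  then show ?thesis
    unfolding gderiv_def by (rule has_derivative_subst) (auto simp: inner_sum_right mult.commute)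
qed

lemma GDERIV_inner_left: "GDERIV (\<lambda>x. x \<bullet> i) x :> i"
  unfolding gderiv_def by (auto intro!: derivative_eq_intros)

definition box_bump :: "real \<Rightarrow> 'a::euclidean_space \<Rightarrow> 'a \<Rightarrow> 'a \<Rightarrow> real" where
  "box_bump n a b x = (\<Prod>i\<in>Basis. interval_bump n (a \<bullet> i) (b \<bullet> i) (x \<bullet> i))"

definition box_bump_grad :: "real \<Rightarrow> 'a::euclidean_space \<Rightarrow> 'a \<Rightarrow> 'a \<Rightarrow> 'a" where
  "box_bump_grad n a b x = (\<Sum>i\<in>Basis. (\<Prod>j\<in>Basis-{i}. interval_bump n (a \<bullet> j) (b \<bullet> j) (x \<bullet> j))
       *\<^sub>R interval_bump' n (a \<bullet> i) (b \<bullet> i) (x \<bullet> i) *\<^sub>R i)"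

lemma continuous_on_box_bump: "continuous_on UNIV (box_bump n a b)"
  unfolding box_bump_def[abs_def]
  by (intro continuous_on_prod continuous_on_compose2[OF continuous_on_interval_bump] continuous_intros) auto

lemma abs_box_bump_le_1: "\<bar>box_bump n a b x\<bar> \<le> 1"
  unfolding box_bump_def abs_prod using interval_bump_bounds by (intro prod_le_1) auto

lemma test_fn_box_bump:
  assumes "0 < n" "box a b \<subseteq> D"
  shows "test_fn D (box_bump n a b) (box_bump_grad n a b)"
proof -
  define c where "c = (\<Sum>i\<in>Basis. (a \<bullet> i + 1/n) *\<^sub>R i)"
  define d where "d = (\<Sum>i\<in>Basis. (b \<bullet> i - 1/n) *\<^sub>R i)"
  have "GDERIV (box_bump n a b) x :> box_bump_grad n a b x" for x
    unfolding box_bump_def[abs_def] box_bump_grad_def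
    by (rule GDERIV_prod)
      (auto intro: GDERIV_DERIV_compose[OF GDERIV_inner_left interval_bump_has_real_derivative])
  moreover have "continuous_on UNIV (box_bump_grad n a b)"
    unfolding box_bump_grad_def[abs_def]
    by (intro continuous_intros continuous_on_prod continuous_on_compose2[OF continuous_on_interval_bump]
        continuous_on_compose2[OF continuous_on_interval_bump']) auto
  moreover have "{x. box_bump n a b x \<noteq> 0} \<subseteq> box c d"
  proof
    fix x assume "x \<in> {x. box_bump n a b x \<noteq> 0}"
    then have "\<forall>i\<in>Basis. interval_bump n (a \<bullet> i) (b \<bullet> i) (x \<bullet> i) \<noteq> 0"
      by (simp add: box_bump_def)
    then show "x \<in> box c d"
      using interval_bump_nonzero_imp[OF assms(1)] by (simp add: mem_box c_def d_def) blast
  qed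
  then have "closure {x. box_bump n a b x \<noteq> 0} \<subseteq> cbox c d"
    by (meson box_subset_cbox closure_minimal closed_cbox order_trans)
  moreover have "cbox c d \<subseteq> box a b"
    using assms(1) by (auto simp: mem_box c_def d_def) (smt (verit) divide_pos_pos)+
  ultimately show ?thesis
    unfolding test_fn_def using assms(2)
    by (metis bounded_cbox bounded_subset compact_closure closure_closure order_trans)
qed

lemma eventually_box_bump_eq_indicator:
  "\<forall>\<^sub>F k in sequentially. box_bump (real (Suc k)) a b x = indicator (box a b) x"
proof (cases "x \<in> box a b")
  case True
  then have "\<forall>i\<in>Basis. \<forall>\<^sub>F k in sequentially. interval_bump (real (Suc k)) (a \<bullet> i) (b \<bullet> i) (x \<bullet> i) = 1"
    unfolding mem_box by (blast intro: eventually_interval_bump_eq_1)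
  then show ?thesis
    unfolding eventually_ball_finite_distrib[OF finite_Basis, symmetric]
    by eventually_elim (use True in \<open>simp add: box_bump_def\<close>)
next
  case False
  then obtain i where "i \<in> Basis" "\<not> (a \<bullet> i < x \<bullet> i \<and> x \<bullet> i < b \<bullet> i)"
    by (auto simp: mem_box)
  moreover have "0 < real (Suc k)" for k
    by simp
  ultimately have "interval_bump (real (Suc k)) (a \<bullet> i) (b \<bullet> i) (x \<bullet> i) = 0" for k
    using interval_bump_nonzero_imp by (smt (verit) divide_pos_pos)
  then have "box_bump (real (Suc k)) a b x = 0" for k
    unfolding box_bump_def using \<open>i \<in> Basis\<close> by (intro prod_zero) auto
  then show ?thesis
    using False by simp
qed

section \<open>The fundamental lemma of the calculus of variations\<close>

lemma sigma_finite_measure_lebesgue: "sigma_finite_measure (lebesgue :: 'a::euclidean_space measure)"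
proof -
  obtain A :: "'a set set" where "countable A" "A \<subseteq> sets lborel" "\<Union>A = space lborel"
    "\<forall>a\<in>A. emeasure lborel a \<noteq> \<infinity>"
    using lborel.sigma_finite_countable by blast
  then show ?thesis
    unfolding sigma_finite_measure_def by (intro exI[of _ A]) (auto intro: sets_completionI_sets)
qed

lemma set_integral_cube_tendsto_integral:
  fixes f :: "'a::euclidean_space \<Rightarrow> 'b::{banach,second_countable_topology}"
  assumes f: "integrable lebesgue f"
  shows "(\<lambda>k. LINT x:box (- real k *\<^sub>R One) (real k *\<^sub>R One)|lebesgue. f x) \<longlonglongrightarrow> integral\<^sup>L lebesgue f"
proof -
  let ?Q = "\<lambda>k::nat. box (- real k *\<^sub>R One) (real k *\<^sub>R One) :: 'a set"
  show ?thesis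
    unfolding set_lebesgue_integral_def
  proof (rule integral_dominated_convergence[where w="\<lambda>x. norm (f x)"])
    show "AE x in lebesgue. (\<lambda>k. indicator (?Q k) x *\<^sub>R f x) \<longlonglongrightarrow> f x"
    proof (rule AE_I2, rule tendsto_eventually)
      fix x :: 'a
      obtain N :: nat where "norm x < real N"
        using reals_Archimedean2 by blast
      then have "x \<in> ?Q k" if "N \<le> k" for k
        using that Basis_le_norm[of _ x] by (fastforce simp: mem_box abs_le_iff)
      then show "\<forall>\<^sub>F k in sequentially. indicator (?Q k) x *\<^sub>R f x = f x"
        unfolding eventually_sequentially by (metis indicator_simps(1) scaleR_one)
    qed
    show "(\<lambda>x. indicator (?Q k) x *\<^sub>R f x) \<in> borel_measurable lebesgue" for k
      by (intro borel_measurable_integrable integrable_mult_indicator f) simp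
    show "AE x in lebesgue. norm (indicator (?Q k) x *\<^sub>R f x) \<le> norm (f x)" for k
      by (intro AE_I2) (simp split: split_indicator)
  qed (simp_all add: f borel_measurable_integrable integrable_norm)
qed

lemma set_integral_borel_eq_0_if_set_integral_box_eq_0:
  fixes f :: "'a::euclidean_space \<Rightarrow> 'b::{banach,second_countable_topology}"
  assumes f: "integrable lebesgue f" and box: "\<And>a b. (LINT x:box a b|lebesgue. f x) = 0"
    and A: "A \<in> sets lborel"
  shows "(LINT x:A|lebesgue. f x) = 0"
proof -
  let ?G = "range (\<lambda>(a, b). box a b :: 'a set)"
  have borel: "sets borel = sigma_sets UNIV ?G"
    by (subst borel_eq_box) simp
  then have G_lebesgue: "A \<in> sigma_sets UNIV ?G \<Longrightarrow> A \<in> sets lebesgue" for A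
    by (auto intro: sets_completionI_sets)
  have "(\<lambda>k. 0) \<longlonglongrightarrow> integral\<^sup>L lebesgue f"
    using set_integral_cube_tendsto_integral[OF f] by (simp only: box)
  then have total: "integral\<^sup>L lebesgue f = 0"
    by (simp add: LIMSEQ_const_iff)
  have "Int_stable ?G" "?G \<subseteq> Pow UNIV"
    by (auto simp: Int_stable_def box_Int_box)
  moreover have "A \<in> sigma_sets UNIV ?G"
    using A borel by simp
  ultimately show ?thesis
  proof (induction rule: sigma_sets_induct_disjoint)
    case (compl A)
    have "indicator (UNIV - A) x *\<^sub>R f x = f x - indicator A x *\<^sub>R f x" for x
      by (simp split: split_indicator)
    then have "(LINT x:UNIV - A|lebesgue. f x) = integral\<^sup>L lebesgue f - (LINT x:A|lebesgue. f x)"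
      unfolding set_lebesgue_integral_def
      using Bochner_Integration.integral_diff[OF f integrable_mult_indicator[OF G_lebesgue[OF compl.hyps] f]]
      by simp
    then show ?case
      using compl.IH total by simp
  next
    case (union A)
    have "(LINT x:(\<Union>i. A i)|lebesgue. f x) = (\<Sum>i. (LINT x:A i|lebesgue. f x))"
    proof (rule lebesgue_integral_countable_add)
      show "A i \<in> sets lebesgue" for i
        using union.hyps(2) G_lebesgue by blast
      show "A i \<inter> A j = {}" if "i \<noteq> j" for i j
        using union.hyps(1) that by (simp add: disjoint_family_on_def)
      show "set_integrable lebesgue (\<Union>i. A i) f"
        using union.hyps(2) G_lebesgue unfolding set_integrable_def
        by (intro integrable_mult_indicator f) blast
    qed
    then show ?case
      using union.IH by simp
  qed (use box in \<open>auto simp: set_lebesgue_integral_def\<close>)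
qed

lemma AE_eq_0_if_set_integral_box_eq_0:
  fixes f :: "'a::euclidean_space \<Rightarrow> 'b::{banach,second_countable_topology}"
  assumes f: "integrable lebesgue f" and box: "\<And>a b. (LINT x:box a b|lebesgue. f x) = 0"
  shows "AE x in lebesgue. f x = 0"
proof -
  have "(LINT x:A|lebesgue. f x) = 0" if A: "A \<in> sets lebesgue" for A
  proof -
    obtain S N N' where SN: "A = S \<union> N" "N \<subseteq> N'" "N' \<in> null_sets lborel" "S \<in> sets lborel"
      using sets_completionE[OF A] .
    have "AE x in lebesgue. x \<notin> N'"
      using AE_completion[OF AE_not_in[OF SN(3)]] .
    then have "AE x in lebesgue. indicator A x *\<^sub>R f x = indicator S x *\<^sub>R f x"
      by eventually_elim (use SN in \<open>auto split: split_indicator\<close>)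
    moreover have "S \<in> sets lebesgue"
      using SN(4) by (auto intro: sets_completionI_sets)
    ultimately have "(LINT x:A|lebesgue. f x) = (LINT x:S|lebesgue. f x)"
      unfolding set_lebesgue_integral_def
      by (intro integral_cong_AE borel_measurable_integrable integrable_mult_indicator A f)
    also have "\<dots> = 0"
      using f box SN(4) by (rule set_integral_borel_eq_0_if_set_integral_box_eq_0)
    finally show ?thesis .
  qed
  then show ?thesis
    by (rule sigma_finite_measure.density_zero[OF sigma_finite_measure_lebesgue f])
qed

lemma set_integral_box_eq_0_if_test_fn:
  fixes W :: "'a::euclidean_space \<Rightarrow> 'b::{banach,second_countable_topology}"
  assumes W: "set_integrable lebesgue D W"
    and test: "\<And>\<psi> g. test_fn D \<psi> g \<Longrightarrow> (LINT x:D|lebesgue. \<psi> x *\<^sub>R W x) = 0"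
    and "box a b \<subseteq> D"
  shows "(LINT x:box a b|lebesgue. W x) = 0"
proof -
  define V where "V x = indicator D x *\<^sub>R W x" for x
  have V: "integrable lebesgue V"
    using W unfolding set_integrable_def V_def .
  have "(\<lambda>k. integral\<^sup>L lebesgue (\<lambda>x. box_bump (real (Suc k)) a b x *\<^sub>R V x))
      \<longlonglongrightarrow> integral\<^sup>L lebesgue (\<lambda>x. indicator (box a b) x *\<^sub>R V x)"
  proof (rule integral_dominated_convergence[where w="\<lambda>x. norm (V x)"])
    show "AE x in lebesgue. (\<lambda>k. box_bump (real (Suc k)) a b x *\<^sub>R V x) \<longlonglongrightarrow> indicator (box a b) x *\<^sub>R V x"
      using eventually_box_bump_eq_indicator
      by (intro AE_I2 tendsto_eventually) (auto elim: eventually_mono)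
    show "AE x in lebesgue. norm (box_bump (real (Suc k)) a b x *\<^sub>R V x) \<le> norm (V x)" for k
    proof (rule AE_I2)
      fix x
      have "\<bar>box_bump (real (Suc k)) a b x\<bar> * norm (V x) \<le> norm (V x)"
        by (rule mult_left_le_one_le) (simp_all add: abs_box_bump_le_1)
      then show "norm (box_bump (real (Suc k)) a b x *\<^sub>R V x) \<le> norm (V x)"
        by simp
    qed
    have "box_bump (real (Suc k)) a b \<in> borel_measurable lebesgue" for k
      by (intro measurable_completion) (simp add: borel_measurable_continuous_onI continuous_on_box_bump)
    then show "(\<lambda>x. box_bump (real (Suc k)) a b x *\<^sub>R V x) \<in> borel_measurable lebesgue" for k
      using borel_measurable_integrable[OF V] by (rule borel_measurable_scaleR)
    show "(\<lambda>x. indicator (box a b) x *\<^sub>R V x) \<in> borel_measurable lebesgue"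
      by (intro borel_measurable_integrable integrable_mult_indicator V) simp
  qed (simp add: V integrable_norm)
  moreover have "integral\<^sup>L lebesgue (\<lambda>x. box_bump (real (Suc k)) a b x *\<^sub>R V x) = 0" for k
  proof -
    have "test_fn D (box_bump (real (Suc k)) a b) (box_bump_grad (real (Suc k)) a b)"
      using assms(3) by (intro test_fn_box_bump) simp_all
    from test[OF this] show ?thesis
      by (simp add: V_def set_lebesgue_integral_def mult.commute)
  qed
  moreover have "indicator (box a b) x *\<^sub>R V x = indicator (box a b) x *\<^sub>R W x" for x
    using assms(3) by (auto simp: V_def split: split_indicator)
  ultimately show ?thesis
    unfolding set_lebesgue_integral_def by (simp add: LIMSEQ_const_iff)
qed

lemma AE_eq_0_on_box_if_test_fn:
  fixes W :: "'a::euclidean_space \<Rightarrow> 'b::{banach,second_countable_topology}"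
  assumes W: "set_integrable lebesgue D W"
    and test: "\<And>\<psi> g. test_fn D \<psi> g \<Longrightarrow> (LINT x:D|lebesgue. \<psi> x *\<^sub>R W x) = 0"
    and ab: "box a b \<subseteq> D"
  shows "AE x in lebesgue. x \<in> box a b \<longrightarrow> W x = 0"
proof -
  have "integrable lebesgue (\<lambda>x. indicator (box a b) x *\<^sub>R W x)"
    using set_integrable_subset[OF W _ ab] unfolding set_integrable_def by simp
  moreover have "(LINT x:box c d|lebesgue. indicator (box a b) x *\<^sub>R W x) = 0" for c d
  proof -
    have "(LINT x:box c d|lebesgue. indicator (box a b) x *\<^sub>R W x) = (LINT x:box c d \<inter> box a b|lebesgue. W x)"
      unfolding set_lebesgue_integral_def by (simp add: indicator_inter_arith)
    also have "\<dots> = 0"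
      using Int_mono[OF subset_refl ab, of "box c d"] unfolding box_Int_box
      by (intro set_integral_box_eq_0_if_test_fn[OF W] test) blast+
    finally show ?thesis .
  qed
  ultimately have "AE x in lebesgue. indicator (box a b) x *\<^sub>R W x = 0"
    by (rule AE_eq_0_if_set_integral_box_eq_0)
  then show ?thesis
    by eventually_elim (simp add: indicator_def)
qed

lemma fundamental_lemma_calculus_of_variations:
  fixes W :: "'a::euclidean_space \<Rightarrow> 'b::{banach,second_countable_topology}"
  assumes "open D" and W: "set_integrable lebesgue D W"
    and test: "\<And>\<psi> g. test_fn D \<psi> g \<Longrightarrow> (LINT x:D|lebesgue. \<psi> x *\<^sub>R W x) = 0"
  shows "AE x in lebesgue. x \<in> D \<longrightarrow> W x = 0"
proof -
  have on_box: "AE x in lebesgue. x \<in> box a b \<longrightarrow> W x = 0" if "box a b \<subseteq> D" for a b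
    using that by (intro AE_eq_0_on_box_if_test_fn[OF W] test) blast+
  obtain \<D> where \<D>: "countable \<D>" "\<D> \<subseteq> Pow D" "\<And>X. X \<in> \<D> \<Longrightarrow> \<exists>a b. X = box a b" "\<Union>\<D> = D"
    using open_countable_Union_open_box[OF \<open>open D\<close>] by metis
  have "AE x in lebesgue. x \<in> X \<longrightarrow> W x = 0" if "X \<in> \<D>" for X
    using \<D>(2) \<D>(3)[OF that] that on_box by blast
  then have "AE x in lebesgue. \<forall>X\<in>\<D>. x \<in> X \<longrightarrow> W x = 0"
    using \<D>(1) by (rule AE_ball_countable')
  then show ?thesis
    by eventually_elim (use \<D>(4) in blast)
qed

section \<open>Weak gradients\<close>

lemma wgrad_spec:
  assumes "H1 \<Omega> f"
  shows "L2v \<Omega> (wgrad \<Omega> f)" and "is_weak_grad \<Omega> f (wgrad \<Omega> f)"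
proof -
  have "\<exists>G. L2v \<Omega> G \<and> is_weak_grad \<Omega> f G"
    using assms by (simp add: H1_def)
  then have "L2v \<Omega> (wgrad \<Omega> f) \<and> is_weak_grad \<Omega> f (wgrad \<Omega> f)"
    unfolding wgrad_def by (rule someI_ex)
  then show "L2v \<Omega> (wgrad \<Omega> f)" and "is_weak_grad \<Omega> f (wgrad \<Omega> f)"
    by simp_all
qed

lemma set_integrable_if_square_integrable:
  fixes F :: "'a::euclidean_space \<Rightarrow> 'b::{banach,second_countable_topology}"
  assumes \<Omega>: "\<Omega> \<in> lmeasurable" and F: "set_borel_measurable lebesgue \<Omega> F"
    and F2: "set_integrable lebesgue \<Omega> (\<lambda>x. (norm (F x))\<^sup>2)"
  shows "set_integrable lebesgue \<Omega> F"
proof (rule set_integrable_bound[OF _ F])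
  have "set_integrable lebesgue \<Omega> (\<lambda>_. 1::real)"
    using \<Omega> by (simp add: set_integrable_def lmeasurable_iff_integrable)
  then show "set_integrable lebesgue \<Omega> (\<lambda>x. 1 + (norm (F x))\<^sup>2)"
    using F2 by (rule set_integral_add(1))
  have "t \<le> 1 + t\<^sup>2" for t :: real
    using zero_le_power2[of "t - 1/2"] by (simp add: power2_diff power_divide)
  then have "norm (F x) \<le> norm (1 + (norm (F x))\<^sup>2)" for x
    by (metis abs_of_nonneg add_nonneg_nonneg real_norm_def zero_le_one zero_le_power2)
  then show "AE x in lebesgue. x \<in> \<Omega> \<longrightarrow> norm (F x) \<le> norm (1 + (norm (F x))\<^sup>2)"
    by simp
qed

lemma L2_imp_set_integrable: "L2 \<Omega> f \<Longrightarrow> \<Omega> \<in> lmeasurable \<Longrightarrow> set_integrable lebesgue \<Omega> f"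
  using set_integrable_if_square_integrable[of \<Omega> f] by (simp add: L2_def)

lemma L2v_imp_set_integrable: "L2v \<Omega> G \<Longrightarrow> \<Omega> \<in> lmeasurable \<Longrightarrow> set_integrable lebesgue \<Omega> G"
  using set_integrable_if_square_integrable[of \<Omega> G] by (simp add: L2v_def)

lemma set_integrable_L2_scaleR_continuous:
  fixes g :: "'a::euclidean_space \<Rightarrow> 'b::{banach,second_countable_topology}"
  assumes f: "L2 \<Omega> f" and \<Omega>: "bounded \<Omega>" "\<Omega> \<in> lmeasurable" and g: "continuous_on UNIV g"
  shows "set_integrable lebesgue \<Omega> (\<lambda>x. f x *\<^sub>R g x)"
proof -
  obtain C where C: "\<forall>x\<in>closure \<Omega>. norm (g x) \<le> C"
    using compact_continuous_image[of "closure \<Omega>" g] compact_closure[of \<Omega>] \<Omega>(1) g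
    by (metis bounded_pos compact_imp_bounded continuous_on_subset image_eqI subset_UNIV)
  have "set_integrable lebesgue \<Omega> (\<lambda>x. C * f x)"
    using L2_imp_set_integrable[OF f \<Omega>(2)] by simp
  moreover have "set_borel_measurable lebesgue \<Omega> (\<lambda>x. f x *\<^sub>R g x)"
  proof -
    have "(\<lambda>x. indicator \<Omega> x *\<^sub>R f x) \<in> borel_measurable lebesgue"
      using f by (simp add: L2_def set_borel_measurable_def)
    moreover have "g \<in> borel_measurable lebesgue"
      by (intro measurable_completion) (simp add: borel_measurable_continuous_onI g)
    ultimately show ?thesis
      unfolding set_borel_measurable_def using borel_measurable_scaleR by fastforce
  qed
  moreover have "norm (f x *\<^sub>R g x) \<le> norm (C * f x)" if "x \<in> \<Omega>" for x
  proof -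
    have "norm (g x) \<le> \<bar>C\<bar>"
      using C that closure_subset by (meson abs_ge_self order_trans subsetD)
    then have "\<bar>f x\<bar> * norm (g x) \<le> \<bar>f x\<bar> * \<bar>C\<bar>"
      by (rule mult_left_mono) simp
    then show ?thesis
      by (simp add: abs_mult mult.commute)
  qed
  then have "AE x in lebesgue. x \<in> \<Omega> \<longrightarrow> norm (f x *\<^sub>R g x) \<le> norm (C * f x)"
    by simp
  ultimately show ?thesis
    by (rule set_integrable_bound)
qed

lemma linear_combination_mem:
  fixes S :: "('a \<Rightarrow> real) set"
  assumes "(\<lambda>x. 0) \<in> S" and "\<And>f g. f \<in> S \<Longrightarrow> g \<in> S \<Longrightarrow> (\<lambda>x. f x + g x) \<in> S"
    and "\<And>c f. f \<in> S \<Longrightarrow> (\<lambda>x. c * f x) \<in> S" and "\<And>i. i \<in> I \<Longrightarrow> f i \<in> S"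
  shows "(\<lambda>x. \<Sum>i\<in>I. c i * f i x) \<in> S"
  using assms(4)
proof (induction I rule: infinite_finite_induct)
  case (insert i I)
  then show ?case
    using assms(2)[OF assms(3)] by simp
qed (use assms(1) in simp_all)

lemma closed_subspace_H1_imp_H1: "closed_subspace_H1 \<Omega> V \<Longrightarrow> f \<in> V \<Longrightarrow> H1 \<Omega> f"
  unfolding closed_subspace_H1_def by blast

lemma closed_subspace_H1_add:
  "closed_subspace_H1 \<Omega> V \<Longrightarrow> f \<in> V \<Longrightarrow> g \<in> V \<Longrightarrow> (\<lambda>x. f x + g x) \<in> V"
  unfolding closed_subspace_H1_def by blast

lemma closed_subspace_H1_linear_combination:
  assumes "closed_subspace_H1 \<Omega> V" "\<And>i. i \<in> I \<Longrightarrow> f i \<in> V"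
  shows "(\<lambda>x. \<Sum>i\<in>I. c i * f i x) \<in> V"
proof (rule linear_combination_mem)
  show "(\<lambda>x. 0) \<in> V" "\<And>c f. f \<in> V \<Longrightarrow> (\<lambda>x. c * f x) \<in> V"
    using assms(1) unfolding closed_subspace_H1_def by blast+
qed (use assms closed_subspace_H1_add in blast)+

lemma test_fn_eq_0_outside: "test_fn D \<psi> g \<Longrightarrow> x \<notin> D \<Longrightarrow> \<psi> x = 0"
  unfolding test_fn_def by (metis (mono_tags) closure_subset mem_Collect_eq subsetD)

lemma test_fn_mono: "test_fn D \<psi> g \<Longrightarrow> D \<subseteq> E \<Longrightarrow> test_fn E \<psi> g"
  unfolding test_fn_def by blast

text \<open>Integrability is part of the definition so that these functions form a linear space.\<close>

definition weak_grad_zero_on :: "'a::euclidean_space set \<Rightarrow> 'a set \<Rightarrow> ('a \<Rightarrow> real) \<Rightarrow> bool" where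
  "weak_grad_zero_on \<Omega> D f \<longleftrightarrow> (\<forall>\<psi> g. test_fn D \<psi> g \<longrightarrow>
     set_integrable lebesgue \<Omega> (\<lambda>x. f x *\<^sub>R g x) \<and> (LINT x:\<Omega>|lebesgue. f x *\<^sub>R g x) = 0)"

lemma weak_grad_zero_on_add:
  assumes "weak_grad_zero_on \<Omega> D f" "weak_grad_zero_on \<Omega> D g"
  shows "weak_grad_zero_on \<Omega> D (\<lambda>x. f x + g x)"
  unfolding weak_grad_zero_on_def scaleR_add_left
proof (intro allI impI)
  fix \<psi> h assume "test_fn D \<psi> h"
  then have "set_integrable lebesgue \<Omega> (\<lambda>x. f x *\<^sub>R h x)" "(LINT x:\<Omega>|lebesgue. f x *\<^sub>R h x) = 0"
    "set_integrable lebesgue \<Omega> (\<lambda>x. g x *\<^sub>R h x)" "(LINT x:\<Omega>|lebesgue. g x *\<^sub>R h x) = 0"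
    using assms by (simp_all add: weak_grad_zero_on_def)
  then show "set_integrable lebesgue \<Omega> (\<lambda>x. f x *\<^sub>R h x + g x *\<^sub>R h x) \<and>
      (LINT x:\<Omega>|lebesgue. f x *\<^sub>R h x + g x *\<^sub>R h x) = 0"
    by (simp add: set_integral_add)
qed

lemma weak_grad_zero_on_linear_combination:
  assumes "\<And>i. i \<in> I \<Longrightarrow> weak_grad_zero_on \<Omega> D (f i)"
  shows "weak_grad_zero_on \<Omega> D (\<lambda>x. \<Sum>i\<in>I. c i * f i x)"
proof -
  have "(\<lambda>x. \<Sum>i\<in>I. c i * f i x) \<in> {f. weak_grad_zero_on \<Omega> D f}"
  proof (rule linear_combination_mem)
    show "(\<lambda>x. c * f x) \<in> {f. weak_grad_zero_on \<Omega> D f}" if "f \<in> {f. weak_grad_zero_on \<Omega> D f}" for c f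
      using that by (simp add: weak_grad_zero_on_def flip: scaleR_scaleR)
  qed (use assms weak_grad_zero_on_add in \<open>simp_all add: weak_grad_zero_on_def\<close>)
  then show ?thesis
    by simp
qed

lemma weak_grad_zero_on_if_grad_supp_in:
  assumes f: "H1 \<Omega> f" and \<Omega>: "bounded \<Omega>" "\<Omega> \<in> lmeasurable" and supp: "grad_supp_in \<Omega> f T"
    and D: "D \<subseteq> \<Omega>" "D \<inter> T = {}"
  shows "weak_grad_zero_on \<Omega> D f"
  unfolding weak_grad_zero_on_def
proof (intro allI impI conjI)
  fix \<psi> g assume test: "test_fn D \<psi> g"
  then show "set_integrable lebesgue \<Omega> (\<lambda>x. f x *\<^sub>R g x)"
    using f \<Omega> by (intro set_integrable_L2_scaleR_continuous) (simp_all add: H1_def test_fn_def)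
  have "(LINT x:\<Omega>|lebesgue. f x *\<^sub>R g x) = - (LINT x:\<Omega>|lebesgue. \<psi> x *\<^sub>R wgrad \<Omega> f x)"
    using wgrad_spec(2)[OF f] test_fn_mono[OF test D(1)] unfolding is_weak_grad_def by blast
  also have "(LINT x:\<Omega>|lebesgue. \<psi> x *\<^sub>R wgrad \<Omega> f x) = 0"
    unfolding set_lebesgue_integral_def
  proof (rule integral_eq_zero_AE)
    show "AE x in lebesgue. indicator \<Omega> x *\<^sub>R \<psi> x *\<^sub>R wgrad \<Omega> f x = 0"
      using supp unfolding grad_supp_in_def
    proof eventually_elim
      case (elim x)
      then show ?case
        using test_fn_eq_0_outside[OF test, of x] D(2) by (auto split: split_indicator)
    qed
  qed
  finally show "(LINT x:\<Omega>|lebesgue. f x *\<^sub>R g x) = 0"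
    by simp
qed

lemma AE_wgrad_eq_0_if_weak_grad_zero_on:
  assumes f: "H1 \<Omega> f" and \<Omega>: "\<Omega> \<in> lmeasurable" and D: "open D" "D \<subseteq> \<Omega>"
    and zero: "weak_grad_zero_on \<Omega> D f"
  shows "AE x in lebesgue. x \<in> D \<longrightarrow> wgrad \<Omega> f x = 0"
proof (rule fundamental_lemma_calculus_of_variations[OF D(1)])
  have "D \<in> sets lebesgue"
    using D(1) by (intro sets_completionI_sets) (simp add: borel_open)
  then show "set_integrable lebesgue D (wgrad \<Omega> f)"
    using D(2) by (rule set_integrable_subset[OF L2v_imp_set_integrable[OF wgrad_spec(1)[OF f] \<Omega>]])
  fix \<psi> g assume test: "test_fn D \<psi> g"
  have "(LINT x:\<Omega>|lebesgue. f x *\<^sub>R g x) = - (LINT x:\<Omega>|lebesgue. \<psi> x *\<^sub>R wgrad \<Omega> f x)"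
    using wgrad_spec(2)[OF f] test_fn_mono[OF test D(2)] unfolding is_weak_grad_def by blast
  moreover have "(LINT x:\<Omega>|lebesgue. f x *\<^sub>R g x) = 0"
    using zero test unfolding weak_grad_zero_on_def by blast
  moreover have "(LINT x:D|lebesgue. \<psi> x *\<^sub>R wgrad \<Omega> f x) = (LINT x:\<Omega>|lebesgue. \<psi> x *\<^sub>R wgrad \<Omega> f x)"
    unfolding set_lebesgue_integral_def using D(2) test_fn_eq_0_outside[OF test]
    by (intro Bochner_Integration.integral_cong) (auto split: split_indicator)
  ultimately show "(LINT x:D|lebesgue. \<psi> x *\<^sub>R wgrad \<Omega> f x) = 0"
    by simp
qed

section \<open>The medium and the eigenfunctions\<close>

lemma Ddel_subset: "Ddel \<Omega> M A0 K A t \<subseteq> \<Omega>"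
  by (auto simp: Ddel_def)

lemma open_Ddel: "open \<Omega> \<Longrightarrow> open (Ddel \<Omega> M A0 K A t)"
  unfolding Ddel_def by (intro open_Diff closed_closure)

lemma Ddel_Int_closure_Sdel: "Ddel \<Omega> M A0 K A t \<inter> closure (Sdel \<Omega> M A0 t) = {}"
  using closure_mono[of "Sdel \<Omega> M A0 t" "Uall \<Omega> K A t \<union> Sdel \<Omega> M A0 t"] by (auto simp: Ddel_def)

lemma Ddel_Int_closure_Udel:
  assumes "k \<in> {1..K}"
  shows "Ddel \<Omega> M A0 K A t \<inter> closure (Udel \<Omega> A k t) = {}"
proof -
  have "Udel \<Omega> A k t \<subseteq> Uall \<Omega> K A t \<union> Sdel \<Omega> M A0 t"
    using assms by (auto simp: Uall_def)
  then have "closure (Udel \<Omega> A k t) \<subseteq> closure (Uall \<Omega> K A t \<union> Sdel \<Omega> M A0 t)"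
    by (rule closure_mono)
  then show ?thesis
    by (auto simp: Ddel_def)
qed

lemma AE_wgrad_eq_0_on_Ddel:
  fixes c0 c :: "nat \<Rightarrow> real" and f0 f :: "nat \<Rightarrow> 'a::euclidean_space \<Rightarrow> real"
  assumes \<Omega>: "open \<Omega>" "bounded \<Omega>" and V: "closed_subspace_H1 \<Omega> V"
    and f0: "\<And>m. m \<in> {1..M} \<Longrightarrow> f0 m \<in> V" "\<And>m. m \<in> {1..M} \<Longrightarrow> grad_supp_in \<Omega> (f0 m) (closure (Sdel \<Omega> M A0 t))"
    and f: "\<And>k. k \<in> {1..K} \<Longrightarrow> f k \<in> V" "\<And>k. k \<in> {1..K} \<Longrightarrow> grad_supp_in \<Omega> (f k) (closure (Udel \<Omega> A k t))"
  shows "AE x in lebesgue. x \<in> Ddel \<Omega> M A0 K A t \<longrightarrow>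
    wgrad \<Omega> (\<lambda>x. (\<Sum>m\<in>{1..M}. c0 m * f0 m x) + (\<Sum>k\<in>{1..K}. c k * f k x)) x = 0"
proof (rule AE_wgrad_eq_0_if_weak_grad_zero_on)
  show \<Omega>_lmeasurable: "\<Omega> \<in> lmeasurable"
    using \<Omega> by (intro bounded_set_imp_lmeasurable sets_completionI_sets) (simp_all add: borel_open)
  show "H1 \<Omega> (\<lambda>x. (\<Sum>m\<in>{1..M}. c0 m * f0 m x) + (\<Sum>k\<in>{1..K}. c k * f k x))"
    by (intro closed_subspace_H1_imp_H1[OF V] closed_subspace_H1_add[OF V]
        closed_subspace_H1_linear_combination[OF V] f0 f)
  show "open (Ddel \<Omega> M A0 K A t)" "Ddel \<Omega> M A0 K A t \<subseteq> \<Omega>"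
    using \<Omega>(1) by (rule open_Ddel) (rule Ddel_subset)
  show "weak_grad_zero_on \<Omega> (Ddel \<Omega> M A0 K A t)
      (\<lambda>x. (\<Sum>m\<in>{1..M}. c0 m * f0 m x) + (\<Sum>k\<in>{1..K}. c k * f k x))"
  proof (intro weak_grad_zero_on_add weak_grad_zero_on_linear_combination)
    show "weak_grad_zero_on \<Omega> (Ddel \<Omega> M A0 K A t) (f0 m)" if "m \<in> {1..M}" for m
      by (rule weak_grad_zero_on_if_grad_supp_in[OF closed_subspace_H1_imp_H1[OF V f0(1)[OF that]]
            \<Omega>(2) \<Omega>_lmeasurable f0(2)[OF that] Ddel_subset Ddel_Int_closure_Sdel])
    show "weak_grad_zero_on \<Omega> (Ddel \<Omega> M A0 K A t) (f k)" if "k \<in> {1..K}" for k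
      by (rule weak_grad_zero_on_if_grad_supp_in[OF closed_subspace_H1_imp_H1[OF V f(1)[OF that]]
            \<Omega>(2) \<Omega>_lmeasurable f(2)[OF that] Ddel_subset Ddel_Int_closure_Udel[OF that]])
  qed
qed

lemma borel_measurable_antimono_nonneg:
  fixes \<mu> :: "real \<Rightarrow> real"
  assumes "\<And>s t. 0 \<le> s \<Longrightarrow> s \<le> t \<Longrightarrow> \<mu> t \<le> \<mu> s"
  shows "(\<lambda>t. \<mu> (max 0 t)) \<in> borel_measurable borel"
proof -
  have "mono (\<lambda>t. - \<mu> (max 0 t))"
    by (intro monoI) (simp add: assms max.mono)
  then show ?thesis
    using borel_measurable_mono borel_measurable_uminus by fastforce
qed

lemma set_integrable_weighted_square_norm:
  fixes \<mu> :: "real \<Rightarrow> real"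
  assumes W: "L2v \<Omega> W" and G: "L2v \<Omega> G"
    and antimono: "\<And>s t. 0 \<le> s \<Longrightarrow> s \<le> t \<Longrightarrow> \<mu> t \<le> \<mu> s"
    and nonneg: "\<And>t. 0 \<le> t \<Longrightarrow> 0 \<le> \<mu> t"
  shows "set_integrable lebesgue \<Omega> (\<lambda>x. \<mu> (norm (W x)) * (norm (G x))\<^sup>2)"
proof -
  have G2: "set_integrable lebesgue \<Omega> (\<lambda>x. (norm (G x))\<^sup>2)"
    using G by (simp add: L2v_def)
  have "(\<lambda>x. indicator \<Omega> x *\<^sub>R W x) \<in> borel_measurable lebesgue"
    using W by (simp add: L2v_def set_borel_measurable_def)
  then have "(\<lambda>x. \<mu> (max 0 (norm (indicator \<Omega> x *\<^sub>R W x)))) \<in> borel_measurable lebesgue"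
    by (intro measurable_compose[OF _ borel_measurable_antimono_nonneg[OF antimono]]
        measurable_compose[OF _ borel_measurable_norm])
  moreover have "(\<lambda>x. indicator \<Omega> x *\<^sub>R (norm (G x))\<^sup>2) \<in> borel_measurable lebesgue"
    using G2 by (simp add: set_integrable_def borel_measurable_integrable)
  ultimately have "(\<lambda>x. \<mu> (max 0 (norm (indicator \<Omega> x *\<^sub>R W x))) * (indicator \<Omega> x *\<^sub>R (norm (G x))\<^sup>2))
      \<in> borel_measurable lebesgue"
    by (rule borel_measurable_times)
  moreover have "(\<lambda>x. \<mu> (max 0 (norm (indicator \<Omega> x *\<^sub>R W x))) * (indicator \<Omega> x *\<^sub>R (norm (G x))\<^sup>2))
      = (\<lambda>x. indicator \<Omega> x *\<^sub>R (\<mu> (norm (W x)) * (norm (G x))\<^sup>2))"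
    by (rule ext) (simp split: split_indicator)
  ultimately have "set_borel_measurable lebesgue \<Omega> (\<lambda>x. \<mu> (norm (W x)) * (norm (G x))\<^sup>2)"
    unfolding set_borel_measurable_def by simp
  moreover have "norm (\<mu> (norm (W x)) * (norm (G x))\<^sup>2) \<le> norm (\<mu> 0 * (norm (G x))\<^sup>2)" for x
    using nonneg[of "norm (W x)"] nonneg[of 0] antimono[of 0 "norm (W x)"]
    by (simp add: abs_of_nonneg mult_right_mono)
  then have "AE x in lebesgue. x \<in> \<Omega> \<longrightarrow>
      norm (\<mu> (norm (W x)) * (norm (G x))\<^sup>2) \<le> norm (\<mu> 0 * (norm (G x))\<^sup>2)"
    by simp
  ultimately show ?thesis
    by (rule set_integrable_bound[OF set_integrable_mult_right[OF G2]])
qed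

lemma set_integral_norm_wgrad_le_bilin:
  fixes \<mu> :: "real \<Rightarrow> real"
  assumes \<phi>: "H1 \<Omega> \<phi>" and w: "H1 \<Omega> w" and D: "D \<in> sets lebesgue" "D \<subseteq> \<Omega>"
    and flat: "AE x in lebesgue. x \<in> D \<longrightarrow> wgrad \<Omega> w x = 0"
    and antimono: "\<And>s t. 0 \<le> s \<Longrightarrow> s \<le> t \<Longrightarrow> \<mu> t \<le> \<mu> s"
    and nonneg: "\<And>t. 0 \<le> t \<Longrightarrow> 0 \<le> \<mu> t"
  shows "\<mu> 0 * (LINT x:D|lebesgue. (norm (wgrad \<Omega> \<phi> x))\<^sup>2) \<le> bilin \<Omega> \<mu> w \<phi> \<phi>"
proof -
  define P where "P x = (norm (wgrad \<Omega> \<phi> x))\<^sup>2" for x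
  define F where "F x = \<mu> (norm (wgrad \<Omega> w x)) * P x" for x
  have P: "set_integrable lebesgue \<Omega> (\<lambda>x. \<mu> 0 * P x)"
    using wgrad_spec(1)[OF \<phi>] by (simp add: L2v_def P_def)
  have F: "set_integrable lebesgue \<Omega> F"
    unfolding F_def P_def
    using wgrad_spec(1)[OF w] wgrad_spec(1)[OF \<phi>] antimono nonneg
    by (rule set_integrable_weighted_square_norm)
  have "AE x in lebesgue. indicator D x *\<^sub>R F x = indicator D x *\<^sub>R (\<mu> 0 * P x)"
    using flat by eventually_elim (simp add: F_def split: split_indicator)
  then have "(LINT x:D|lebesgue. F x) = (LINT x:D|lebesgue. \<mu> 0 * P x)"
    using set_integrable_subset[OF F D] set_integrable_subset[OF P D]
    unfolding set_lebesgue_integral_def set_integrable_def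
    by (intro integral_cong_AE borel_measurable_integrable)
  then have "\<mu> 0 * (LINT x:D|lebesgue. P x) = (LINT x:D|lebesgue. F x)"
    by simp
  also have "\<dots> \<le> (LINT x:\<Omega>|lebesgue. F x)"
    unfolding set_lebesgue_integral_def
  proof (rule integral_mono)
    show "integrable lebesgue (\<lambda>x. indicator D x *\<^sub>R F x)"
      using set_integrable_subset[OF F D] by (simp add: set_integrable_def)
    show "integrable lebesgue (\<lambda>x. indicator \<Omega> x *\<^sub>R F x)"
      using F by (simp add: set_integrable_def)
    show "indicator D x *\<^sub>R F x \<le> indicator \<Omega> x *\<^sub>R F x" for x
      using D(2) nonneg[of "norm (wgrad \<Omega> w x)"] by (auto simp: F_def P_def split: split_indicator)
  qed
  also have "\<dots> = bilin \<Omega> \<mu> w \<phi> \<phi>"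
    by (simp add: bilin_def F_def P_def power2_norm_eq_inner)
  finally show ?thesis
    by (simp add: P_def)
qed

lemma eigen_seq_Rayleigh_quotient:
  assumes "eigen_seq \<Omega> V0 B J lam phi" "j \<in> J"
  shows "phi j \<in> V0" and "B (phi j) (phi j) = lam j"
proof -
  show "phi j \<in> V0"
    using assms unfolding eigen_seq_def by blast
  moreover have "\<forall>v\<in>V0. B (phi j) v = lam j * l2inner \<Omega> (phi j) v" "l2inner \<Omega> (phi j) (phi j) = 1"
    using assms unfolding eigen_seq_def by auto
  ultimately show "B (phi j) (phi j) = lam j"
    by simp
qed

theorem proposition1:
  fixes \<Omega> :: "'a::euclidean_space set" and M K :: nat and A0 A :: "nat \<Rightarrow> 'a set"
    and u0hat uhat :: "nat \<Rightarrow> real" and muhat :: "real \<Rightarrow> real \<Rightarrow> real"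
    and V :: "real \<Rightarrow> ('a \<Rightarrow> real) set" and chi0 chi :: "real \<Rightarrow> nat \<Rightarrow> 'a \<Rightarrow> real"
    and \<eta> \<epsilon> \<delta> :: real and J :: "nat set" and lam :: "nat \<Rightarrow> real" and phi :: "nat \<Rightarrow> 'a \<Rightarrow> real"
  defines "V0 \<equiv> \<lambda>t. V t \<inter> {f. H10 \<Omega> f}"
    and "ud \<equiv> \<lambda>t x. (\<Sum>m\<in>{1..M}. u0hat m * chi0 t m x) + (\<Sum>k\<in>{1..K}. uhat k * chi t k x)"
  assumes dom: "bounded \<Omega>" "connected \<Omega>" "\<Omega> \<noteq> {}" "lipschitz_domain \<Omega>"
    and weight: "\<forall>e>0. muhat e 0 = 1 / e \<and> (\<forall>s t. 0 \<le> s \<longrightarrow> s \<le> t \<longrightarrow> muhat e t \<le> muhat e s)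
                   \<and> (\<forall>t\<ge>0. muhat e t > 0 \<and> t * muhat e t \<le> 1)"
    and A0: "\<forall>m\<in>{1..M}. open (A0 m) \<and> connected (A0 m) \<and>
               hausdorff (DIM('a) - 1) (frontier (A0 m) \<inter> frontier \<Omega>) > 0"
      "\<forall>m\<in>{1..M}. \<forall>n\<in>{1..M}. m \<noteq> n \<longrightarrow> A0 m \<inter> A0 n = {}"
      "closure \<Omega> \<subseteq> closure (\<Union>m\<in>{1..M}. A0 m)"
    and A: "\<forall>k\<in>{1..K}. uhat k \<noteq> 0 \<and> open (A k) \<and> connected (A k) \<and>
              compact (closure (A k)) \<and> closure (A k) \<subseteq> \<Omega> - Sset \<Omega> M A0"
      "\<forall>k\<in>{1..K}. \<forall>j\<in>{1..K}. k \<noteq> j \<longrightarrow> frontier (A k) \<inter> frontier (A j) = {}"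
    and V: "\<forall>t>0. closed_subspace_H1 \<Omega> (V t)"
      "\<forall>t>0. \<forall>m\<in>{1..M}. chi0 t m \<in> V t"
      "\<forall>t>0. \<forall>k\<in>{1..K}. chi t k \<in> V0 t"
      "\<forall>m\<in>{1..M}. ((\<lambda>t. LINT x:\<Omega>|lebesgue. (chi0 t m x - indicator (A0 m) x)^2) \<longlongrightarrow> 0) (at_right 0)"
      "\<forall>k\<in>{1..K}. ((\<lambda>t. LINT x:\<Omega>|lebesgue. (chi t k x - indicator (A k) x)^2) \<longlongrightarrow> 0) (at_right 0)"
    and eta: "\<eta> > 0" "\<forall>k\<in>{1..K}. Adel \<Omega> A k \<eta> \<noteq> {}"
      "closure (Sdel \<Omega> M A0 \<eta>) \<inter> closure (Uall \<Omega> K A \<eta>) = {}"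
      "\<forall>k\<in>{1..K}. \<forall>j\<in>{1..K}. k \<noteq> j \<longrightarrow> closure (Udel \<Omega> A k \<eta>) \<inter> closure (Udel \<Omega> A j \<eta>) = {}"
      "\<forall>E\<in>components (Ddel \<Omega> M A0 K A \<eta> - Aall \<Omega> K A \<eta>). hausdorff (DIM('a) - 1) (frontier E \<inter> frontier \<Omega>) > 0"
      "\<forall>t. 0 < t \<and> t \<le> \<eta> \<longrightarrow>
         (\<forall>m\<in>{1..M}. grad_Linf \<Omega> (chi0 t m) \<and> grad_supp_in \<Omega> (chi0 t m) (closure (Sdel \<Omega> M A0 t))) \<and>
         (\<forall>k\<in>{1..K}. grad_Linf \<Omega> (chi t k) \<and> grad_supp_in \<Omega> (chi t k) (closure (Udel \<Omega> A k t)))"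
    and eps: "\<epsilon> > 0"
    and del: "0 < \<delta>" "\<delta> \<le> \<eta>"
    and eig: "eigen_seq \<Omega> (V0 \<delta>) (bilin \<Omega> (muhat \<epsilon>) (ud \<delta>)) J lam phi"
  shows "\<forall>j\<in>J. (LINT x:Ddel \<Omega> M A0 K A \<delta>|lebesgue. (norm (wgrad \<Omega> (phi j) x))^2) \<le> lam j * \<epsilon>"
proof -
  have "open \<Omega>"
    using dom(4) by (simp add: lipschitz_domain_def)
  have V\<delta>: "closed_subspace_H1 \<Omega> (V \<delta>)" and chi0: "\<And>m. m \<in> {1..M} \<Longrightarrow> chi0 \<delta> m \<in> V \<delta>"
    and chi: "\<And>k. k \<in> {1..K} \<Longrightarrow> chi \<delta> k \<in> V \<delta>"
    using V(1-3)[rule_format, OF del(1)] unfolding V0_def by blast+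
  have u: "H1 \<Omega> (ud \<delta>)"
    unfolding ud_def by (intro closed_subspace_H1_imp_H1[OF V\<delta>] closed_subspace_H1_add[OF V\<delta>]
        closed_subspace_H1_linear_combination[OF V\<delta>] chi0 chi)
  have flat: "AE x in lebesgue. x \<in> Ddel \<Omega> M A0 K A \<delta> \<longrightarrow> wgrad \<Omega> (ud \<delta>) x = 0"
    unfolding ud_def using eta(6)[rule_format, OF conjI[OF del]]
    by (intro AE_wgrad_eq_0_on_Ddel[OF \<open>open \<Omega>\<close> dom(1) V\<delta>] chi0 chi) blast+
  have D: "Ddel \<Omega> M A0 K A \<delta> \<in> sets lebesgue" "Ddel \<Omega> M A0 K A \<delta> \<subseteq> \<Omega>"
    using open_Ddel[OF \<open>open \<Omega>\<close>, of M A0 K A \<delta>] by (auto intro: sets_completionI_sets simp: borel_open Ddel_def)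
  have \<mu>: "muhat \<epsilon> 0 = 1 / \<epsilon>" "\<And>s t. 0 \<le> s \<Longrightarrow> s \<le> t \<Longrightarrow> muhat \<epsilon> t \<le> muhat \<epsilon> s"
    "\<And>t. 0 \<le> t \<Longrightarrow> 0 \<le> muhat \<epsilon> t"
    using weight[rule_format, OF eps] by (blast, blast, fastforce)
  show ?thesis
  proof
    fix j assume "j \<in> J"
    note eigen = eigen_seq_Rayleigh_quotient[OF eig this]
    have "H1 \<Omega> (phi j)"
      using eigen(1) closed_subspace_H1_imp_H1[OF V\<delta>] by (simp add: V0_def)
    from set_integral_norm_wgrad_le_bilin[where \<mu>="muhat \<epsilon>", OF this u D flat \<mu>(2,3)]
    show "(LINT x:Ddel \<Omega> M A0 K A \<delta>|lebesgue. (norm (wgrad \<Omega> (phi j) x))\<^sup>2) \<le> lam j * \<epsilon>"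
      using eps by (simp add: eigen(2) \<mu>(1) field_simps)
  qed
qed

end
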